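(* Let $R$ be a finite or countable commutative unital ring, and let $p$ be the smallest prime that is not invertible in $R$ (with $p=\infty$ if $R$ contains $\mathbf Q$). For every integer $c$ with $1\le c\le p-1$, $$\varepsilon\big(\Gamma_{c,R};X_0(R),Y(R)\big)\le\sqrt{c/p}$$ (interpreted as $0$ when $p=\infty$).
   Context: For a commutative unital ring $R$ and integer $c\ge0$, let $R[x]_{\le c}$ be the additive group of polynomials in $x$ over $R$ of degree at most $c$, and for $r\in R$ let $y(r)$ be the automorphism $P(x)\mapsto P(x+r)$ of $R[x]_{\le c}$. Define $\Gamma_{c,R}=R[x]_{\le c}\rtimes R$, with $r\in R$ acting via $y(r)$. Let $X_i(R)=\{rx^{c-i}: r\in R\}$ ($0\le i\le c$) and $Y(R)=\{y(r):r\in R\}$, viewed as subgroups of $\Gamma_{c,R}$. For a group $H$ generated by subgroups $X,Y$, $\varepsilon(H;X,Y)$ is the supremum, over all unitary representations $(\pi,V)$ of $H$ without nonzero $H$-invariant vectors, of $\sup\{|\langle v_1,v_2\rangle| : v_1\in V^X, v_2\in V^Y, \|v_1\|=\|v_2\|=1\}$ (taken to be $0$ if $V^X$ or $V^Y$ is zero), where $V^X,V^Y$ denote the subspaces of $X$- and $Y$-invariant vectors. *)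

theory Defs
  imports "HOL-Analysis.Analysis" "HOL-Computational_Algebra.Polynomial"
    "HOL-Computational_Algebra.Primes" "HOL-Library.Extended_Nat"
begin

text \<open>Elements are pairs (P, r) with deg P <= c; r acts by y(r): P(x) |-> P(x+r).\<close>

definition gamma_carrier :: "nat \<Rightarrow> ('r::comm_ring_1 poly \<times> 'r) set" where
  "gamma_carrier c = {(P, r). degree P \<le> c}"

definition y_act :: "'r::comm_ring_1 \<Rightarrow> 'r poly \<Rightarrow> 'r poly" where
  "y_act r P = pcompose P [:r, 1:]"

definition gamma_mult :: "('r::comm_ring_1 poly \<times> 'r) \<Rightarrow> ('r poly \<times> 'r) \<Rightarrow> ('r poly \<times> 'r)" where
  "gamma_mult g h = (fst g + y_act (snd g) (fst h), snd g + snd h)"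

definition gamma_one :: "'r::comm_ring_1 poly \<times> 'r" where
  "gamma_one = (0, 0)"

definition X0_sub :: "nat \<Rightarrow> ('r::comm_ring_1 poly \<times> 'r) set" where
  "X0_sub c = {(monom r c, 0) | r. True}"

definition Y_sub :: "('r::comm_ring_1 poly \<times> 'r) set" where
  "Y_sub = {(0, r) | r. True}"

text \<open>A complex Hilbert space is modelled as a real Hilbert space (real_inner, complete)
  together with a complex structure J (multiplication by i), an orthogonal real-linear
  map with J o J = -id.  The complex inner product is then
  <u,v>_C = <u,v> + i <u, J v>  (up to the sign convention for the imaginary part,
  which does not affect its modulus).\<close>

definition complex_structure :: "('v::real_inner \<Rightarrow> 'v) \<Rightarrow> bool" where
  "complex_structure J \<longleftrightarrow> linear J \<and> (\<forall>v. J (J v) = - v) \<and> (\<forall>u v. inner (J u) (J v) = inner u v)"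

definition cinner :: "('v::real_inner \<Rightarrow> 'v) \<Rightarrow> 'v \<Rightarrow> 'v \<Rightarrow> complex" where
  "cinner J u v = Complex (inner u v) (- inner u (J v))"

definition unitary_rep ::
  "nat \<Rightarrow> ('r::comm_ring_1 poly \<times> 'r \<Rightarrow> 'v::{real_inner,complete_space} \<Rightarrow> 'v) \<Rightarrow> ('v \<Rightarrow> 'v) \<Rightarrow> bool" where
  "unitary_rep c \<pi> J \<longleftrightarrow> complex_structure J \<and>
     (\<forall>g\<in>gamma_carrier c. linear (\<pi> g) \<and> (\<forall>v. \<pi> g (J v) = J (\<pi> g v))
        \<and> (\<forall>v. norm (\<pi> g v) = norm v) \<and> surj (\<pi> g)) \<and>
     \<pi> gamma_one = id \<and>
     (\<forall>g\<in>gamma_carrier c. \<forall>h\<in>gamma_carrier c. \<pi> (gamma_mult g h) = \<pi> g \<circ> \<pi> h)"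

definition invariant_vectors :: "('g \<Rightarrow> 'v \<Rightarrow> 'v) \<Rightarrow> 'g set \<Rightarrow> 'v set" where
  "invariant_vectors \<pi> H = {v. \<forall>h\<in>H. \<pi> h v = v}"

definition least_nonunit_prime :: "'r::comm_ring_1 itself \<Rightarrow> enat" where
  "least_nonunit_prime TYPE('r) =
     (if \<exists>p::nat. prime p \<and> \<not> (of_nat p :: 'r) dvd 1
      then enat (LEAST p::nat. prime p \<and> \<not> (of_nat p :: 'r) dvd 1)
      else \<infinity>)"

definition eps_bound :: "nat \<Rightarrow> enat \<Rightarrow> real" where
  "eps_bound c p = (case p of enat q \<Rightarrow> sqrt (real c / real q) | \<infinity> \<Rightarrow> 0)"

end

theory Submission
  imports Defs
begin

text \<open>For \<open>j < N\<close> let \<open>P\<^sub>j\<close> project onto the vectors fixed by the conjugate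
  \<open>y(j) X\<^sub>0(R) y(j)\<^sup>-\<^sup>1\<close>. As \<open>y(j) v\<^sub>1\<close> lies in the range of \<open>P\<^sub>j\<close> and
  \<open>v\<^sub>2\<close> is \<open>Y\<close>-fixed, \<open>\<langle>v\<^sub>1, v\<^sub>2\<rangle> \<le> \<parallel>P\<^sub>j v\<^sub>2\<parallel>\<close>. The \<open>P\<^sub>j\<close> commute, since
  the conjugates all lie in the abelian group \<open>R[x]\<^sub>\<le>\<^sub>c\<close>. If the primes below \<open>N\<close>
  are invertible in \<open>R\<close>, Lagrange interpolation writes every polynomial of degree \<open>\<le> c\<close>
  as a combination of any \<open>c + 1\<close> of the \<open>(x + j)\<^sup>c\<close>, so any \<open>c + 1\<close> of the
  conjugates generate \<open>R[x]\<^sub>\<le>\<^sub>c\<close>, and the intersection of the corresponding ranges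
  consists of \<open>R[x]\<^sub>\<le>\<^sub>c\<close>-invariant vectors; these are orthogonal to \<open>v\<^sub>2\<close>
  because there are no \<open>\<Gamma>\<close>-invariant vectors. An inequality of Bessel type for such
  commuting projections yields \<open>N \<langle>v\<^sub>1, v\<^sub>2\<rangle>\<^sup>2 \<le> \<Sum>\<^sub>j \<parallel>P\<^sub>j v\<^sub>2\<parallel>\<^sup>2 \<le> c\<close>; take \<open>N = p\<close>
  (or let \<open>N \<rightarrow> \<infinity>\<close> if \<open>p = \<infinity>\<close>).
  The complex inner product is reduced to the real one by rotating \<open>v\<^sub>2\<close> with the
  complex structure.\<close>

section \<open>Orthogonal projections\<close>

lemma norm_diff_sq_le_midpoint:
  fixes x a b :: "'v::real_inner"
  assumes "0 \<le> d" "d \<le> norm (x - midpoint a b)"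
  shows "norm (a - b)^2 \<le> 2 * norm (x - a)^2 + 2 * norm (x - b)^2 - 4 * d^2"
proof -
  have "(x - a) + (x - b) = 2 *\<^sub>R (x - midpoint a b)"
    by (simp add: midpoint_def algebra_simps scaleR_2)
  then have "norm ((x - a) + (x - b))^2 = 4 * norm (x - midpoint a b)^2"
    by (simp add: power_mult_distrib)
  moreover have "norm ((x - a) - (x - b))^2 + norm ((x - a) + (x - b))^2
      = 2 * norm (x - a)^2 + 2 * norm (x - b)^2"
    by (simp add: power2_norm_eq_inner inner_diff inner_add inner_commute algebra_simps)
  moreover have "d^2 \<le> norm (x - midpoint a b)^2"
    using assms by (simp add: power_mono)
  ultimately show ?thesis by (simp add: norm_minus_commute)
qed

lemma minimizing_sequence_Cauchy:
  fixes S :: "'v::real_inner set"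
  assumes S: "convex S" and f: "\<And>n. f n \<in> S" and d: "0 \<le> d" "\<And>s. s \<in> S \<Longrightarrow> d \<le> norm (x - s)"
    and lim: "(\<lambda>n. norm (x - f n)) \<longlonglongrightarrow> d"
  shows "Cauchy f"
proof (rule metric_CauchyI)
  define g where "g n = 2 * (norm (x - f n)^2 - d^2)" for n
  have "g \<longlonglongrightarrow> 2 * (d^2 - d^2)" unfolding g_def by (intro tendsto_intros lim)
  then have g: "g \<longlonglongrightarrow> 0" by simp
  have cau: "norm (f m - f n)^2 \<le> g m + g n" for m n
  proof -
    have "midpoint (f m) (f n) \<in> S"
      using S f by (simp add: midpoint_def convex_def scaleR_add_right)
    then have "norm (f m - f n)^2 \<le> 2 * norm (x - f m)^2 + 2 * norm (x - f n)^2 - 4 * d^2"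
      using d by (intro norm_diff_sq_le_midpoint) auto
    then show ?thesis by (simp add: g_def algebra_simps)
  qed
  fix e :: real assume "e > 0"
  then obtain M where M: "\<And>n. n \<ge> M \<Longrightarrow> \<bar>g n\<bar> < e^2 / 2"
    using LIMSEQ_D[OF g, of "e^2 / 2"] by auto
  show "\<exists>M. \<forall>m\<ge>M. \<forall>n\<ge>M. dist (f m) (f n) < e"
  proof (intro exI allI impI)
    fix m n assume "M \<le> m" "M \<le> n"
    then have "norm (f m - f n)^2 < e^2"
      using cau[of m n] M[of m] M[of n] by linarith
    with \<open>e > 0\<close> show "dist (f m) (f n) < e"
      by (simp add: dist_norm power_less_imp_less_base)
  qed
qed

lemma nearest_point_exists:
  fixes S :: "'v::{real_inner,complete_space} set"
  assumes S: "convex S" "closed S" "S \<noteq> {}"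
  obtains y where "y \<in> S" "\<And>s. s \<in> S \<Longrightarrow> norm (x - y) \<le> norm (x - s)"
proof -
  define d where "d = infdist x S"
  have d: "0 \<le> d" "\<And>s. s \<in> S \<Longrightarrow> d \<le> norm (x - s)"
    using infdist_le[of _ S x] by (auto simp: d_def dist_norm infdist_nonneg)
  have "\<exists>s\<in>S. norm (x - s) < d + 1 / Suc n" for n
  proof -
    have "(INF s\<in>S. dist x s) < d + 1 / Suc n"
      using infdist_notempty[OF S(3)] by (simp add: d_def)
    moreover have "bdd_below (dist x ` S)" by (auto intro: bdd_belowI[of _ 0])
    ultimately show ?thesis by (subst (asm) cINF_less_iff) (simp_all add: dist_norm S(3))
  qed
  then obtain f where f: "\<And>n. f n \<in> S" "\<And>n. norm (x - f n) < d + 1 / Suc n"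
    by metis
  have lim: "(\<lambda>n. norm (x - f n)) \<longlonglongrightarrow> d"
  proof (rule real_tendsto_sandwich[where f = "\<lambda>_. d" and h = "\<lambda>n. d + 1 / Suc n"])
    show "(\<lambda>n. d + 1 / Suc n) \<longlonglongrightarrow> d"
      using tendsto_add[OF tendsto_const LIMSEQ_Suc[OF lim_inverse_n']] by simp
    show "\<forall>\<^sub>F n in sequentially. norm (x - f n) \<le> d + 1 / Suc n"
      by (intro always_eventually allI less_imp_le f(2))
    show "\<forall>\<^sub>F n in sequentially. d \<le> norm (x - f n)"
      by (intro always_eventually allI d(2) f(1))
  qed (rule tendsto_const)
  have "Cauchy f" by (rule minimizing_sequence_Cauchy[OF S(1) f(1) d(1) d(2) lim])
  then obtain y where y: "f \<longlonglongrightarrow> y"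
    using Cauchy_convergent_iff convergent_def by blast
  have "y \<in> S" using closed_sequentially[OF S(2)] f(1) y by blast
  moreover have "norm (x - y) = d"
    using LIMSEQ_unique[OF tendsto_norm[OF tendsto_diff[OF tendsto_const y]] lim] .
  ultimately show ?thesis using d(2) by (intro that) auto
qed

lemma nearest_point_subspace_orthogonal:
  fixes S :: "'v::real_inner set"
  assumes "subspace S" "y \<in> S" "\<And>s. s \<in> S \<Longrightarrow> norm (x - y) \<le> norm (x - s)" "s \<in> S"
  shows "inner (x - y) s = 0"
proof (cases "s = 0")
  case False
  define z where "z = x - y"
  define a where "a = inner z s"
  define t where "t = a / inner s s"
  have s2: "inner s s > 0" using False by simp
  have "y + t *\<^sub>R s \<in> S" using assms(1,2,4) by (simp add: subspace_add subspace_scale)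
  then have "norm z^2 \<le> norm (z - t *\<^sub>R s)^2"
    using assms(3) by (simp add: z_def power_mono algebra_simps)
  also have "\<dots> = norm z^2 - 2 * t * a + t^2 * inner s s"
    unfolding power2_norm_eq_inner a_def
    by (simp add: inner_diff_left inner_diff_right inner_commute power2_eq_square algebra_simps)
  also have "\<dots> = norm z^2 - a^2 / inner s s"
    using s2 by (simp add: t_def power2_eq_square field_simps)
  finally have "a^2 / inner s s \<le> 0" by simp
  then have "a^2 \<le> 0" using s2 by (simp add: divide_le_0_iff)
  then show ?thesis by (simp add: a_def z_def)
qed simp

definition closed_subspace :: "'v::real_inner set \<Rightarrow> bool" where
  "closed_subspace S \<longleftrightarrow> subspace S \<and> closed S"

definition orth_proj :: "'v::real_inner set \<Rightarrow> 'v \<Rightarrow> 'v" where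
  "orth_proj S x = (SOME y. y \<in> S \<and> (\<forall>s\<in>S. inner (x - y) s = 0))"

context
  fixes S :: "'v::{real_inner,complete_space} set"
  assumes S: "closed_subspace S"
begin

lemma orth_proj_characterization: "orth_proj S x \<in> S \<and> (\<forall>s\<in>S. inner (x - orth_proj S x) s = 0)"
proof -
  have "subspace S" "closed S" using S by (simp_all add: closed_subspace_def)
  moreover from this obtain y where "y \<in> S" "\<And>s. s \<in> S \<Longrightarrow> norm (x - y) \<le> norm (x - s)"
    by (metis nearest_point_exists subspace_imp_convex subspace_0 empty_iff)
  ultimately have "\<exists>y. y \<in> S \<and> (\<forall>s\<in>S. inner (x - y) s = 0)"
    using nearest_point_subspace_orthogonal by blast
  then show ?thesis unfolding orth_proj_def by (rule someI_ex)
qed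

lemma orth_proj_in: "orth_proj S x \<in> S"
  using orth_proj_characterization by blast

lemma orth_proj_orthogonal: "s \<in> S \<Longrightarrow> inner (x - orth_proj S x) s = 0"
  using orth_proj_characterization by blast

lemma orth_proj_unique:
  assumes "y \<in> S" "\<And>s. s \<in> S \<Longrightarrow> inner (x - y) s = 0"
  shows "orth_proj S x = y"
proof -
  have d: "y - orth_proj S x \<in> S"
    using S assms(1) orth_proj_in by (simp add: closed_subspace_def subspace_diff)
  have "inner (y - orth_proj S x) (y - orth_proj S x)
      = inner (x - orth_proj S x) (y - orth_proj S x) - inner (x - y) (y - orth_proj S x)"
    by (simp add: inner_diff_left)
  also have "\<dots> = 0" using orth_proj_orthogonal[OF d] assms(2)[OF d] by simp
  finally show ?thesis by simp
qed

lemma orth_proj_id: "s \<in> S \<Longrightarrow> orth_proj S s = s"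
  by (rule orth_proj_unique) auto

lemma orth_proj_self_adjoint: "inner (orth_proj S x) z = inner x (orth_proj S z)"
proof -
  have "inner (orth_proj S x) z = inner (orth_proj S x) (orth_proj S z)"
    using orth_proj_orthogonal[OF orth_proj_in, of z x]
    by (simp add: inner_diff_left inner_diff_right inner_commute)
  also have "\<dots> = inner x (orth_proj S z)"
    using orth_proj_orthogonal[OF orth_proj_in, of x z] by (simp add: inner_diff_left)
  finally show ?thesis .
qed

lemma norm_orth_proj_sq: "norm (orth_proj S x)^2 = inner x (orth_proj S x)"
  by (metis power2_norm_eq_inner orth_proj_self_adjoint orth_proj_id orth_proj_in)

lemma orth_proj_diff: "orth_proj S (x - z) = orth_proj S x - orth_proj S z"
proof (rule orth_proj_unique)
  show "orth_proj S x - orth_proj S z \<in> S"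
    using S orth_proj_in by (simp add: closed_subspace_def subspace_diff)
  show "inner (x - z - (orth_proj S x - orth_proj S z)) s = 0" if "s \<in> S" for s
    using orth_proj_orthogonal[OF that, of x] orth_proj_orthogonal[OF that, of z]
    by (simp add: inner_diff_left algebra_simps)
qed

lemma orth_proj_commute:
  assumes T: "linear T" "\<And>v. T' (T v) = v" "\<And>v. T (T' v) = v"
    "\<And>a b. inner (T a) (T b) = inner a b"
    "\<And>s. s \<in> S \<Longrightarrow> T s \<in> S" "\<And>s. s \<in> S \<Longrightarrow> T' s \<in> S"
  shows "orth_proj S (T x) = T (orth_proj S x)"
proof (rule orth_proj_unique)
  show "T (orth_proj S x) \<in> S" by (rule T(5)[OF orth_proj_in])
  show "inner (T x - T (orth_proj S x)) s = 0" if "s \<in> S" for s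
  proof -
    have "inner (T x - T (orth_proj S x)) s = inner (T (x - orth_proj S x)) (T (T' s))"
      by (simp add: T(3) linear_diff[OF T(1)])
    also have "\<dots> = 0" using T(4) orth_proj_orthogonal[OF T(6)[OF that]] by simp
    finally show ?thesis .
  qed
qed

end

lemma norm_orth_proj_split:
  fixes U V :: "'v::{real_inner,complete_space} set"
  assumes U: "closed_subspace U" and V: "closed_subspace V"
    and VU: "\<And>u. u \<in> U \<Longrightarrow> orth_proj V u \<in> U"
  shows "norm (orth_proj V x)^2
    = norm (orth_proj V (orth_proj U x))^2 + norm (orth_proj V (x - orth_proj U x))^2"
proof -
  let ?y = "orth_proj U x" and ?z = "x - orth_proj U x"
  have "inner (orth_proj V ?z) (orth_proj V ?y) = inner ?z (orth_proj V (orth_proj V ?y))"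
    by (rule orth_proj_self_adjoint[OF V])
  also have "\<dots> = 0" by (intro orth_proj_orthogonal[OF U] VU orth_proj_in[OF U])
  finally have "inner (orth_proj V ?y) (orth_proj V ?z) = 0" by (simp add: inner_commute)
  moreover have "orth_proj V x = orth_proj V ?y + orth_proj V ?z"
    by (simp add: orth_proj_diff[OF V])
  ultimately show ?thesis by (simp add: norm_add_Pythagorean orthogonal_def)
qed

definition orth_to_intersections :: "(nat \<Rightarrow> 'v::real_inner set) \<Rightarrow> nat \<Rightarrow> nat \<Rightarrow> 'v \<Rightarrow> bool"
  where "orth_to_intersections W n c x \<longleftrightarrow>
    (\<forall>K w. K \<subseteq> {..<n} \<longrightarrow> card K = Suc c \<longrightarrow> (\<forall>k\<in>K. w \<in> W k) \<longrightarrow> inner x w = 0)"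

context
  fixes W :: "nat \<Rightarrow> 'v::{real_inner,complete_space} set"
  assumes W: "\<And>j. closed_subspace (W j)"
    and commute: "\<And>i j w. w \<in> W j \<Longrightarrow> orth_proj (W i) w \<in> W j"
begin

lemma orth_to_intersections_orth_proj_complement:
  assumes "orth_to_intersections W (Suc n) c x"
  shows "orth_to_intersections W n c (x - orth_proj (W n) x)"
  unfolding orth_to_intersections_def
proof (intro allI impI)
  fix K w assume K: "K \<subseteq> {..<n}" "card K = Suc c" "\<forall>k\<in>K. w \<in> W k"
  then have "K \<subseteq> {..<Suc n}" "\<forall>k\<in>K. orth_proj (W n) w \<in> W k" by (auto intro: commute)
  then have "inner x w = 0" "inner x (orth_proj (W n) w) = 0"
    using assms K unfolding orth_to_intersections_def by blast+
  then show "inner (x - orth_proj (W n) x) w = 0"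
    by (simp add: inner_diff_left orth_proj_self_adjoint[OF W])
qed

lemma orth_to_intersections_orth_proj:
  assumes "orth_to_intersections W (Suc n) (Suc c) x"
  shows "orth_to_intersections W n c (orth_proj (W n) x)"
  unfolding orth_to_intersections_def
proof (intro allI impI)
  fix K w assume K: "K \<subseteq> {..<n}" "card K = Suc c" "\<forall>k\<in>K. w \<in> W k"
  have "n \<notin> K" using K(1) by auto
  then have "insert n K \<subseteq> {..<Suc n}" "card (insert n K) = Suc (Suc c)"
    using K finite_subset[OF K(1)] by auto
  moreover have "\<forall>k\<in>insert n K. orth_proj (W n) w \<in> W k"
    using K by (auto intro: commute orth_proj_in[OF W])
  ultimately have "inner x (orth_proj (W n) w) = 0"
    using assms unfolding orth_to_intersections_def by blast
  then show "inner (orth_proj (W n) x) w = 0" by (simp add: orth_proj_self_adjoint[OF W])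
qed

lemma orth_to_intersections_0_orth_proj:
  assumes "orth_to_intersections W (Suc n) 0 x"
  shows "orth_proj (W n) x = 0"
proof -
  have "{n} \<subseteq> {..<Suc n}" "card {n} = Suc 0" "\<forall>k\<in>{n}. orth_proj (W n) x \<in> W k"
    using orth_proj_in[OF W] by auto
  then have "inner x (orth_proj (W n) x) = 0"
    using assms unfolding orth_to_intersections_def by blast
  then show ?thesis using norm_orth_proj_sq[OF W[of n], of x] by simp
qed

text \<open>Splitting \<open>x\<close> along \<open>W n\<close>, the component in \<open>W n\<close> is orthogonal to every
  \<open>c\<close>-fold intersection of the remaining subspaces, the complementary component to every
  \<open>(c + 1)\<close>-fold one.\<close>

lemma sum_norm_orth_proj_le:
  "orth_to_intersections W n c x \<Longrightarrow> (\<Sum>j<n. norm (orth_proj (W j) x)^2) \<le> real c * norm x^2"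
proof (induction n arbitrary: c x)
  case 0
  then show ?case by simp
next
  case (Suc n)
  define y where "y = orth_proj (W n) x"
  define z where "z = x - y"
  have "inner z y = 0"
    unfolding y_def z_def by (rule orth_proj_orthogonal[OF W orth_proj_in[OF W]])
  then have norm_x: "norm x^2 = norm y^2 + norm z^2"
    using norm_add_Pythagorean[of y z] by (simp add: z_def orthogonal_def inner_commute)
  have z_bound: "(\<Sum>j<n. norm (orth_proj (W j) z)^2) \<le> real c * norm z^2"
    using Suc unfolding z_def y_def by (intro Suc.IH orth_to_intersections_orth_proj_complement)
  have y_bound: "(\<Sum>j<n. norm (orth_proj (W j) y)^2) + norm y^2 \<le> real c * norm y^2"
  proof (cases c)
    case 0
    then have "y = 0" using Suc.prems unfolding y_def by (simp add: orth_to_intersections_0_orth_proj)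
    then show ?thesis using orth_proj_id[OF W subspace_0] W by (simp add: closed_subspace_def)
  next
    case (Suc c')
    then have "(\<Sum>j<n. norm (orth_proj (W j) y)^2) \<le> real c' * norm y^2"
      using Suc.prems unfolding y_def by (intro Suc.IH orth_to_intersections_orth_proj) simp
    then show ?thesis using Suc by (simp add: algebra_simps)
  qed
  have "norm (orth_proj (W j) x)^2 = norm (orth_proj (W j) y)^2 + norm (orth_proj (W j) z)^2" for j
    unfolding y_def z_def by (rule norm_orth_proj_split[OF W W commute])
  then have "(\<Sum>j<Suc n. norm (orth_proj (W j) x)^2)
      = (\<Sum>j<n. norm (orth_proj (W j) y)^2) + (\<Sum>j<n. norm (orth_proj (W j) z)^2) + norm y^2"
    by (simp add: sum.distrib y_def)
  also have "\<dots> \<le> real c * norm x^2" using y_bound z_bound norm_x by (simp add: algebra_simps)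
  finally show ?case .
qed

end


section \<open>Interpolation at unit-separated nodes\<close>

definition unit_inverse :: "'r::comm_ring_1 \<Rightarrow> 'r" where
  "unit_inverse u = (SOME e. u * e = 1)"

lemma unit_inverse_right: "(u :: 'r::comm_ring_1) dvd 1 \<Longrightarrow> u * unit_inverse u = 1"
  unfolding unit_inverse_def by (rule someI_ex) (metis dvdE)

lemma unit_mult_eq_0D: "(u :: 'r::comm_ring_1) dvd 1 \<Longrightarrow> u * x = 0 \<Longrightarrow> x = 0"
  by (metis mult.assoc mult.commute mult_1 mult_zero_right unit_inverse_right)

lemma prod_unit: "(\<And>a. a \<in> A \<Longrightarrow> (f a :: 'r::comm_ring_1) dvd 1) \<Longrightarrow> prod f A dvd 1"
  using prod_dvd_prod[of A f "\<lambda>_. 1"] by simp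

definition unit_separated :: "('a \<Rightarrow> 'r::comm_ring_1) \<Rightarrow> 'a set \<Rightarrow> bool" where
  "unit_separated \<tau> K \<longleftrightarrow> (\<forall>k\<in>K. \<forall>l\<in>K. k \<noteq> l \<longrightarrow> (\<tau> k - \<tau> l) dvd 1)"

lemma unit_separatedD:
  "unit_separated \<tau> K \<Longrightarrow> k \<in> K \<Longrightarrow> l \<in> K \<Longrightarrow> k \<noteq> l \<Longrightarrow> (\<tau> k - \<tau> l) dvd 1"
  by (simp add: unit_separated_def)

lemma unit_separated_subset: "unit_separated \<tau> K \<Longrightarrow> L \<subseteq> K \<Longrightarrow> unit_separated \<tau> L"
  by (auto simp: unit_separated_def)

lemma poly_eq_0_if_unit_separated_roots:
  fixes \<tau> :: "'a \<Rightarrow> 'r::comm_ring_1"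
  assumes "finite K" "unit_separated \<tau> K" "\<And>k. k \<in> K \<Longrightarrow> poly g (\<tau> k) = 0"
    and "degree g < card K"
  shows "g = 0"
  using assms
proof (induction K arbitrary: g rule: finite_induct)
  case empty
  from empty.prems(3) show ?case by simp
next
  case (insert a K)
  define q where "q = synthetic_div g (\<tau> a)"
  have g: "g = [:- \<tau> a, 1:] * q"
    using synthetic_div_correct'[of "\<tau> a" g] insert.prems(2)[of a] by (simp add: q_def)
  have "q = 0"
  proof (cases "degree g = 0")
    case True
    then show ?thesis unfolding q_def by (rule synthetic_div_eq_0_iff[THEN iffD2])
  next
    case False
    show ?thesis
    proof (rule insert.IH)
      show "unit_separated \<tau> K" using insert.prems(1) by (rule unit_separated_subset) auto
      show "degree q < card K"
        using insert.prems(3) insert.hyps False by (simp add: q_def degree_synthetic_div)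
      fix k assume k: "k \<in> K"
      have "(\<tau> k - \<tau> a) dvd 1"
        using k insert.hyps(2) by (intro unit_separatedD[OF insert.prems(1)]) auto
      moreover have "(\<tau> k - \<tau> a) * poly q (\<tau> k) = 0"
      proof -
        have "poly g (\<tau> k) = 0" using insert.prems(2)[of k] k by blast
        then show ?thesis by (simp add: g algebra_simps)
      qed
      ultimately show "poly q (\<tau> k) = 0" by (rule unit_mult_eq_0D)
    qed
  qed
  then show ?case using g by simp
qed

definition lagrange_basis :: "('a \<Rightarrow> 'r::comm_ring_1) \<Rightarrow> 'a set \<Rightarrow> 'a \<Rightarrow> 'r poly" where
  "lagrange_basis \<tau> K k =
     smult (unit_inverse (\<Prod>l\<in>K - {k}. \<tau> k - \<tau> l)) (\<Prod>l\<in>K - {k}. [:- \<tau> l, 1:])"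

lemma poly_lagrange_basis:
  assumes "finite K" "unit_separated \<tau> K" "k \<in> K" "m \<in> K"
  shows "poly (lagrange_basis \<tau> K k) (\<tau> m) = (if m = k then 1 else 0)"
proof (cases "m = k")
  case True
  have "(\<Prod>l\<in>K - {k}. \<tau> k - \<tau> l) dvd 1"
    using assms(2,3) by (intro prod_unit) (auto simp: unit_separated_def)
  then show ?thesis
    using True unit_inverse_right by (simp add: lagrange_basis_def poly_prod mult.commute)
next
  case False
  then have "(\<Prod>l\<in>K - {k}. \<tau> m - \<tau> l) = 0" using assms(1,4) by (intro prod_zero) auto
  then show ?thesis using False by (simp add: lagrange_basis_def poly_prod)
qed

lemma degree_lagrange_basis:
  assumes "finite K" "k \<in> K"
  shows "degree (lagrange_basis \<tau> K k) < card K"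
proof -
  have "degree (lagrange_basis \<tau> K k) \<le> degree (\<Prod>l\<in>K - {k}. [:- \<tau> l, 1:])"
    unfolding lagrange_basis_def by (rule degree_smult_le)
  also have "\<dots> \<le> sum (degree \<circ> (\<lambda>l. [:- \<tau> l, 1:])) (K - {k})"
    using assms(1) by (intro degree_prod_sum_le) simp
  also have "\<dots> = card (K - {k})" by simp
  also have "\<dots> < card K" using assms by (rule card_Diff1_less)
  finally show ?thesis .
qed

lemma lagrange_interpolation:
  assumes K: "finite K" "unit_separated \<tau> K" and f: "degree f < card K"
  shows "f = (\<Sum>k\<in>K. smult (poly f (\<tau> k)) (lagrange_basis \<tau> K k))"
proof -
  let ?L = "\<Sum>k\<in>K. smult (poly f (\<tau> k)) (lagrange_basis \<tau> K k)"
  have "f - ?L = 0"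
  proof (rule poly_eq_0_if_unit_separated_roots[OF K])
    show "poly (f - ?L) (\<tau> m) = 0" if "m \<in> K" for m
    proof -
      have "poly ?L (\<tau> m) = (\<Sum>k\<in>K. if m = k then poly f (\<tau> k) else 0)"
        unfolding poly_sum using K that by (intro sum.cong) (simp_all add: poly_lagrange_basis)
      also have "\<dots> = poly f (\<tau> m)" using K(1) that by simp
      finally show ?thesis by simp
    qed
    have "degree ?L < card K"
      using f degree_lagrange_basis[OF K(1)]
      by (intro degree_sum_less) (auto intro: le_less_trans[OF degree_smult_le])
    then show "degree (f - ?L) < card K" using f by (rule degree_diff_less[rotated])
  qed
  then show ?thesis by simp
qed

lemma sum_power_mult_coeff_lagrange_basis:
  assumes "finite K" "unit_separated \<tau> K" "j < card K"
  shows "(\<Sum>k\<in>K. \<tau> k ^ j * coeff (lagrange_basis \<tau> K k) m) = (if m = j then 1 else 0)"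
proof -
  have "monom 1 j = (\<Sum>k\<in>K. smult (\<tau> k ^ j) (lagrange_basis \<tau> K k))"
    using lagrange_interpolation[OF assms(1,2), of "monom 1 j"] assms(3)
    by (simp add: degree_monom_eq poly_monom)
  then have "coeff (monom 1 j) m = coeff (\<Sum>k\<in>K. smult (\<tau> k ^ j) (lagrange_basis \<tau> K k)) m"
    by simp
  then show ?thesis by (simp add: coeff_sum eq_commute)
qed

text \<open>The weights solve the Vandermonde system
  \<open>\<Sum>k. s k * \<tau> k ^ j = coeff P (c - j) / (c choose j)\<close>, \<open>j \<le> c\<close>,
  whose inverse is given by the coefficients of the Lagrange basis.\<close>

lemma shifted_powers_span:
  fixes \<tau> :: "'a \<Rightarrow> 'r::comm_ring_1" and P :: "'r poly"
  assumes K: "finite K" "card K = Suc c" "unit_separated \<tau> K"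
    and binom: "\<And>i. i \<le> c \<Longrightarrow> (of_nat (c choose i) :: 'r) dvd 1"
    and P: "degree P \<le> c"
  obtains s where "P = (\<Sum>k\<in>K. smult (s k) ([:\<tau> k, 1:] ^ c))"
proof
  define a where "a k m = coeff (lagrange_basis \<tau> K k) m" for k m
  define \<beta> where "\<beta> j = coeff P (c - j) * unit_inverse (of_nat (c choose (c - j)))" for j
  define s where "s k = (\<Sum>m\<le>c. a k m * \<beta> m)" for k
  show "P = (\<Sum>k\<in>K. smult (s k) ([:\<tau> k, 1:] ^ c))"
  proof (rule poly_eqI)
    fix i
    show "coeff P i = coeff (\<Sum>k\<in>K. smult (s k) ([:\<tau> k, 1:] ^ c)) i"
    proof (cases "i \<le> c")
      case False
      then show ?thesis using P by (simp add: coeff_sum coeff_eq_0 degree_linear_power)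
    next
      case True
      have "coeff (\<Sum>k\<in>K. smult (s k) ([:\<tau> k, 1:] ^ c)) i
          = (\<Sum>k\<in>K. s k * (of_nat (c choose i) * \<tau> k ^ (c - i)))"
        using True by (simp add: coeff_sum coeff_linear_poly_power)
      also have "\<dots> = of_nat (c choose i) * (\<Sum>m\<le>c. \<beta> m * (\<Sum>k\<in>K. \<tau> k ^ (c - i) * a k m))"
        unfolding s_def sum_distrib_left sum_distrib_right
        by (subst sum.swap) (simp add: mult_ac)
      also have "\<dots> = of_nat (c choose i) * (\<Sum>m\<le>c. if m = c - i then \<beta> m else 0)"
        using K True unfolding a_def
        by (intro arg_cong[where f = "\<lambda>x. _ * x"] sum.cong)
          (simp_all add: sum_power_mult_coeff_lagrange_basis)
      also have "\<dots> = coeff P i * (of_nat (c choose i) * unit_inverse (of_nat (c choose i)))"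
        using True by (simp add: \<beta>_def binomial_symmetric[symmetric] mult_ac)
      also have "\<dots> = coeff P i" using unit_inverse_right[OF binom[OF True]] by simp
      finally show ?thesis by simp
    qed
  qed
qed


section \<open>Integers below the least non-invertible prime\<close>

lemma of_nat_unit_below:
  assumes primes: "\<And>q. prime q \<Longrightarrow> q < N \<Longrightarrow> (of_nat q :: 'r::comm_ring_1) dvd 1"
    and "0 < n" "n < N"
  shows "(of_nat n :: 'r) dvd 1"
  using assms(2,3)
proof (induction n rule: less_induct)
  case (less n)
  show ?case
  proof (cases "n = 1")
    case False
    then obtain q where q: "prime q" "q dvd n" using prime_factor_nat by blast
    from q(2) obtain m where m: "n = q * m" by (rule dvdE)
    have "0 < m" using m less.prems(1) by simp
    then have "m < n" using m mult_less_mono1[OF prime_gt_1_nat[OF q(1)]] by fastforce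
    with \<open>0 < m\<close> have "(of_nat m :: 'r) dvd 1" using less.IH less.prems by simp
    moreover have "(of_nat q :: 'r) dvd 1"
      using primes q less.prems dvd_imp_le[OF q(2)] by simp
    ultimately show ?thesis using m by (simp add: mult_dvd_mono[of _ 1 _ 1, simplified])
  qed simp
qed

lemma unit_separated_of_nat_below:
  assumes primes: "\<And>q. prime q \<Longrightarrow> q < N \<Longrightarrow> (of_nat q :: 'r::comm_ring_1) dvd 1"
  shows "unit_separated (of_nat :: nat \<Rightarrow> 'r) {..<N}"
  unfolding unit_separated_def
proof (intro ballI impI)
  fix k l assume "k \<in> {..<N}" "l \<in> {..<N}" "k \<noteq> l"
  then consider "l < k" "k - l < N" | "k < l" "l - k < N" by fastforce
  then show "(of_nat k - of_nat l :: 'r) dvd 1"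
  proof cases
    case 1
    then have "(of_nat (k - l) :: 'r) dvd 1" by (intro of_nat_unit_below[OF primes]) auto
    then show ?thesis using 1 by (simp add: of_nat_diff)
  next
    case 2
    then have "(of_nat (l - k) :: 'r) dvd 1" by (intro of_nat_unit_below[OF primes]) auto
    then show ?thesis using 2 by (metis of_nat_diff less_imp_le minus_diff_eq minus_dvd_iff)
  qed
qed

lemma binomial_unit_below:
  assumes "\<And>q. prime q \<Longrightarrow> q < N \<Longrightarrow> (of_nat q :: 'r::comm_ring_1) dvd 1"
    and "c < N" "i \<le> c"
  shows "(of_nat (c choose i) :: 'r) dvd 1"
proof -
  have "(of_nat (fact c) :: 'r) = of_nat (fact i * fact (c - i)) * of_nat (c choose i)"
    by (metis binomial_fact_lemma[OF assms(3)] of_nat_mult)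
  moreover have "(of_nat (fact c) :: 'r) dvd 1"
    unfolding fact_prod of_nat_id of_nat_prod
    using assms(2) by (intro prod_unit of_nat_unit_below[OF assms(1)]) auto
  ultimately show ?thesis by (metis dvd_triv_right dvd_trans)
qed


lemma le_eps_bound:
  fixes m :: real
  assumes "0 \<le> m" and p: "enat c + 1 \<le> least_nonunit_prime TYPE('r::comm_ring_1)"
    and bound: "\<And>N. c < N \<Longrightarrow> (\<And>q. prime q \<Longrightarrow> q < N \<Longrightarrow> (of_nat q :: 'r) dvd 1)
      \<Longrightarrow> real N * m^2 \<le> real c"
  shows "m \<le> eps_bound c (least_nonunit_prime TYPE('r))"
proof (cases "\<exists>p::nat. prime p \<and> \<not> (of_nat p :: 'r) dvd 1")
  case True
  define p where "p = (LEAST p::nat. prime p \<and> \<not> (of_nat p :: 'r) dvd 1)"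
  have lp: "least_nonunit_prime TYPE('r) = enat p"
    using True by (simp add: least_nonunit_prime_def p_def)
  have "c < p" using p lp by (simp add: one_enat_def)
  moreover have "(of_nat q :: 'r) dvd 1" if "prime q" "q < p" for q
    using not_less_Least[of q] that by (auto simp: p_def)
  ultimately have "real p * m^2 \<le> real c" by (rule bound)
  then have "m^2 \<le> real c / real p" using \<open>c < p\<close> by (simp add: field_simps)
  then have "sqrt (m^2) \<le> sqrt (real c / real p)" by (rule real_sqrt_le_mono)
  then show ?thesis using assms(1) lp by (simp add: eps_bound_def)
next
  case False
  then have lp: "least_nonunit_prime TYPE('r) = \<infinity>" by (simp add: least_nonunit_prime_def)
  have "m^2 \<le> real c / real N" if "c < N" for N
    using bound[OF that] False that by (simp add: field_simps)
  then have "m^2 \<le> 0"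
    by (intro LIMSEQ_le_const[OF lim_const_over_n[of "real c"]]) (auto intro!: exI[of _ "Suc c"])
  then show ?thesis using lp by (simp add: eps_bound_def)
qed


section \<open>Complex structures\<close>

lemma inner_complex_structure_self:
  assumes "complex_structure J"
  shows "inner v (J v) = 0"
proof -
  have "inner (J v) (J (J v)) = inner v (J v)" "J (J v) = - v"
    using assms unfolding complex_structure_def by blast+
  then have "inner v (J v) = - inner v (J v)" by (simp add: inner_commute)
  then show ?thesis by simp
qed

lemma norm_rotation:
  assumes J: "complex_structure J" and "a^2 + b^2 = 1"
  shows "norm (a *\<^sub>R v + b *\<^sub>R J v) = norm v"
proof -
  have "inner (J v) (J v) = inner v v" "inner (J v) v = 0"
    using J inner_complex_structure_self[OF J, of v] by (simp_all add: complex_structure_def inner_commute)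
  then have "norm (a *\<^sub>R v + b *\<^sub>R J v)^2 = (a^2 + b^2) * inner v v"
    unfolding power2_norm_eq_inner
    by (simp add: inner_add_left inner_add_right inner_commute power2_eq_square algebra_simps)
  then show ?thesis using assms(2) by (simp add: power2_norm_eq_inner[symmetric])
qed

lemma cmod_cinner_eq_inner_rotation:
  obtains a b :: real
  where "a^2 + b^2 = 1" "cmod (cinner J u v) = inner u (a *\<^sub>R v + b *\<^sub>R J v)"
proof (cases "cmod (cinner J u v) = 0")
  case True
  then show ?thesis by (intro that[of 1 0]) (simp_all add: cinner_def complex_eq_iff)
next
  case False
  define m where "m = cmod (cinner J u v)"
  have m: "m^2 = inner u v ^ 2 + inner u (J v) ^ 2" "m > 0"
    using False by (simp_all add: m_def cinner_def cmod_power2)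
  show ?thesis
  proof (rule that[of "inner u v / m" "inner u (J v) / m"])
    have "(inner u v / m)^2 + (inner u (J v) / m)^2 = (inner u v ^ 2 + inner u (J v) ^ 2) / m^2"
      by (simp add: power_divide add_divide_distrib)
    then show "(inner u v / m)^2 + (inner u (J v) / m)^2 = 1" using m(2) by (simp add: m(1)[symmetric])
    have "inner u ((inner u v / m) *\<^sub>R v + (inner u (J v) / m) *\<^sub>R J v)
        = (inner u v ^ 2 + inner u (J v) ^ 2) / m"
      by (simp add: inner_add_right power2_eq_square add_divide_distrib)
    also have "\<dots> = m^2 / m" using m(1) by simp
    also have "\<dots> = m" using m(2) by (simp add: power2_eq_square)
    finally show "cmod (cinner J u v) = inner u ((inner u v / m) *\<^sub>R v + (inner u (J v) / m) *\<^sub>R J v)"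
      by (simp add: m_def)
  qed
qed


section \<open>Representations of \<open>\<Gamma>\<^sub>c\<^sub>,\<^sub>R\<close>\<close>

lemma y_act_0 [simp]: "y_act 0 P = P"
  by (simp add: y_act_def)

lemma y_act_y_act: "y_act r (y_act s P) = y_act (r + s) P"
  by (simp add: y_act_def pcompose_assoc[symmetric] pcompose_pCons algebra_simps)

lemma y_act_inverse [simp]: "y_act (- t) (y_act t P) = P" "y_act t (y_act (- t) P) = P"
  by (simp_all add: y_act_y_act)

lemma degree_y_act_le: "degree (y_act r P) \<le> degree P"
  using degree_pcompose_le[of P "[:r, 1:]"] by (simp add: y_act_def)

lemma y_act_monom: "y_act t (monom s c) = smult s ([:t, 1:] ^ c)"
proof -
  have "pcompose ([:0, 1:] ^ c) q = q ^ c" for q :: "'a poly"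
    by (induction c) (simp_all add: pcompose_mult pcompose_pCons pcompose_1)
  then show ?thesis by (simp add: y_act_def monom_altdef pcompose_smult)
qed

lemma invariant_vectorsI: "(\<And>h. h \<in> G \<Longrightarrow> \<pi> h v = v) \<Longrightarrow> v \<in> invariant_vectors \<pi> G"
  by (simp add: invariant_vectors_def)

lemma invariant_vectorsD: "v \<in> invariant_vectors \<pi> G \<Longrightarrow> h \<in> G \<Longrightarrow> \<pi> h v = v"
  by (simp add: invariant_vectors_def)

lemma gamma_carrier_iff [simp]: "(P, r) \<in> gamma_carrier c \<longleftrightarrow> degree P \<le> c"
  by (simp add: gamma_carrier_def)

lemma gamma_mult_simps [simp]:
  "gamma_mult (P, 0) (Q, r) = (P + Q, r)"
  "gamma_mult (0, r) (0, s) = (0, r + s)"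
  "gamma_mult (0, r) (P, 0) = (y_act r P, r)"
  by (simp_all add: gamma_mult_def y_act_def)

text \<open>\<open>poly_sub c\<close> is the normal subgroup \<open>R[x]\<^sub>\<le>\<^sub>c\<close> of \<open>\<Gamma>\<^sub>c\<^sub>,\<^sub>R\<close>, and
  \<open>X0_conj c t\<close> is the conjugate \<open>y(t) X\<^sub>0(R) y(t)\<^sup>-\<^sup>1\<close>.\<close>

definition poly_sub :: "nat \<Rightarrow> ('r::comm_ring_1 poly \<times> 'r) set" where
  "poly_sub c = {(P, 0) | P. degree P \<le> c}"

definition X0_conj :: "nat \<Rightarrow> 'r::comm_ring_1 \<Rightarrow> ('r poly \<times> 'r) set" where
  "X0_conj c t = {(y_act t (monom s c), 0) | s. True}"

lemma degree_y_act_monom_le: "degree (y_act t (monom s c)) \<le> c"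
  using degree_y_act_le[of t "monom s c"] degree_monom_le[of s c] by linarith

lemma X0_conj_subset_poly_sub: "X0_conj c t \<subseteq> poly_sub c"
  by (auto simp: X0_conj_def poly_sub_def degree_y_act_monom_le)

lemma poly_sub_subset_gamma_carrier: "poly_sub c \<subseteq> gamma_carrier c"
  by (auto simp: poly_sub_def)

locale gamma_rep =
  fixes c :: nat and \<pi> :: "'r::comm_ring_1 poly \<times> 'r \<Rightarrow> 'v::{real_inner,complete_space} \<Rightarrow> 'v"
    and J :: "'v \<Rightarrow> 'v"
  assumes unitary: "unitary_rep c \<pi> J"
begin

lemma complex_structure: "complex_structure J"
  using unitary unfolding unitary_rep_def by blast

lemma linear_rep: "g \<in> gamma_carrier c \<Longrightarrow> linear (\<pi> g)"
  using unitary unfolding unitary_rep_def by blast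

lemma norm_rep: "g \<in> gamma_carrier c \<Longrightarrow> norm (\<pi> g v) = norm v"
  using unitary unfolding unitary_rep_def by blast

lemma rep_J: "g \<in> gamma_carrier c \<Longrightarrow> \<pi> g (J v) = J (\<pi> g v)"
  using unitary unfolding unitary_rep_def by blast

lemma rep_one [simp]: "\<pi> (0, 0) v = v"
  using unitary unfolding unitary_rep_def gamma_one_def by simp

lemma rep_mult:
  "g \<in> gamma_carrier c \<Longrightarrow> h \<in> gamma_carrier c \<Longrightarrow> \<pi> (gamma_mult g h) v = \<pi> g (\<pi> h v)"
  using unitary unfolding unitary_rep_def by simp

lemma inner_rep: "g \<in> gamma_carrier c \<Longrightarrow> inner (\<pi> g a) (\<pi> g b) = inner a b"
  using norm_rep[of g "a + b"] norm_rep[of g a] norm_rep[of g b] linear_add[OF linear_rep, of g a b]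
  by (simp add: dot_norm)

lemma bounded_linear_rep: "g \<in> gamma_carrier c \<Longrightarrow> bounded_linear (\<pi> g)"
  using linear_rep[of g] norm_rep[of g]
  by (intro bounded_linear_intro[where K = 1]) (auto simp: linear_add linear_scale)

lemma rep_translation_translation:
  "degree P \<le> c \<Longrightarrow> degree Q \<le> c \<Longrightarrow> \<pi> (P, 0) (\<pi> (Q, 0) v) = \<pi> (P + Q, 0) v"
  using rep_mult[of "(P, 0)" "(Q, 0)"] by simp

lemma rep_translations_commute:
  "degree P \<le> c \<Longrightarrow> degree Q \<le> c \<Longrightarrow> \<pi> (P, 0) (\<pi> (Q, 0) v) = \<pi> (Q, 0) (\<pi> (P, 0) v)"
  by (simp add: rep_translation_translation add.commute)

lemma rep_y_y: "\<pi> (0, r) (\<pi> (0, s) v) = \<pi> (0, r + s) v"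
  using rep_mult[of "(0, r)" "(0, s)"] by simp

lemma rep_split: "degree P \<le> c \<Longrightarrow> \<pi> (P, r) v = \<pi> (P, 0) (\<pi> (0, r) v)"
  using rep_mult[of "(P, 0)" "(0, r)"] by simp

lemma rep_translation_y:
  assumes "degree P \<le> c"
  shows "\<pi> (P, 0) (\<pi> (0, r) v) = \<pi> (0, r) (\<pi> (y_act (- r) P, 0) v)"
proof -
  have "degree (y_act (- r) P) \<le> c" using assms degree_y_act_le order_trans by blast
  then show ?thesis
    using assms rep_mult[of "(P, 0)" "(0, r)" v] rep_mult[of "(0, r)" "(y_act (- r) P, 0)" v] by simp
qed

lemma invariant_vectors_closed_subspace:
  assumes "G \<subseteq> gamma_carrier c"
  shows "closed_subspace (invariant_vectors \<pi> G)"
proof -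
  have "subspace (invariant_vectors \<pi> G)"
    using assms linear_rep
    by (auto simp: subspace_def invariant_vectors_def linear_0 linear_add linear_scale subset_iff)
  moreover have "closed {v. \<pi> g v = v}" if "g \<in> G" for g
    using bounded_linear_rep[of g] that assms
    by (intro closed_Collect_eq continuous_intros) (auto simp: linear_continuous_on)
  then have "closed (\<Inter>g\<in>G. {v. \<pi> g v = v})" by blast
  moreover have "invariant_vectors \<pi> G = (\<Inter>g\<in>G. {v. \<pi> g v = v})"
    by (auto simp: invariant_vectors_def)
  ultimately show ?thesis by (simp add: closed_subspace_def)
qed

lemma translation_preserves_invariants:
  assumes G: "G \<subseteq> poly_sub c" and Q: "degree Q \<le> c" and v: "v \<in> invariant_vectors \<pi> G"
  shows "\<pi> (Q, 0) v \<in> invariant_vectors \<pi> G"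
proof (rule invariant_vectorsI)
  fix h assume h: "h \<in> G"
  then obtain P where P: "h = (P, 0)" "degree P \<le> c" using G by (auto simp: poly_sub_def)
  have "\<pi> h (\<pi> (Q, 0) v) = \<pi> (Q, 0) (\<pi> h v)" using P Q rep_translations_commute by simp
  also have "\<pi> h v = v" using v h by (rule invariant_vectorsD)
  finally show "\<pi> h (\<pi> (Q, 0) v) = \<pi> (Q, 0) v" .
qed

lemma orth_proj_invariants_translation:
  assumes G: "G \<subseteq> poly_sub c" and Q: "degree Q \<le> c"
  shows "orth_proj (invariant_vectors \<pi> G) (\<pi> (Q, 0) x)
    = \<pi> (Q, 0) (orth_proj (invariant_vectors \<pi> G) x)"
proof (rule orth_proj_commute[where T' = "\<pi> (- Q, 0)"])
  have Q': "degree (- Q) \<le> c" using Q by simp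
  show "closed_subspace (invariant_vectors \<pi> G)"
    using G poly_sub_subset_gamma_carrier by (intro invariant_vectors_closed_subspace) blast
  show "linear (\<pi> (Q, 0))" using Q by (intro linear_rep) simp
  show "\<pi> (- Q, 0) (\<pi> (Q, 0) v) = v" "\<pi> (Q, 0) (\<pi> (- Q, 0) v) = v" for v
    using Q Q' by (simp_all add: rep_translation_translation)
  show "inner (\<pi> (Q, 0) a) (\<pi> (Q, 0) b) = inner a b" for a b
    using Q by (intro inner_rep) simp
  show "\<pi> (Q, 0) s \<in> invariant_vectors \<pi> G" "\<pi> (- Q, 0) s \<in> invariant_vectors \<pi> G"
    if "s \<in> invariant_vectors \<pi> G" for s
    using translation_preserves_invariants[OF G] Q Q' that by blast+
qed

lemma orth_proj_invariants_preserves_invariants: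
  assumes G: "G \<subseteq> poly_sub c" and H: "H \<subseteq> poly_sub c" and w: "w \<in> invariant_vectors \<pi> G"
  shows "orth_proj (invariant_vectors \<pi> H) w \<in> invariant_vectors \<pi> G"
proof (rule invariant_vectorsI)
  fix h assume h: "h \<in> G"
  then obtain Q where Q: "h = (Q, 0)" "degree Q \<le> c" using G by (auto simp: poly_sub_def)
  have "\<pi> h (orth_proj (invariant_vectors \<pi> H) w) = orth_proj (invariant_vectors \<pi> H) (\<pi> h w)"
    using orth_proj_invariants_translation[OF H Q(2)] Q(1) by simp
  also have "\<pi> h w = w" using w h by (rule invariant_vectorsD)
  finally show "\<pi> h (orth_proj (invariant_vectors \<pi> H) w) = orth_proj (invariant_vectors \<pi> H) w" .
qed

lemma y_preserves_poly_invariants: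
  assumes v: "v \<in> invariant_vectors \<pi> (poly_sub c)"
  shows "\<pi> (0, r) v \<in> invariant_vectors \<pi> (poly_sub c)"
proof (rule invariant_vectorsI)
  fix h :: "'r poly \<times> 'r" assume "h \<in> poly_sub c"
  then obtain P where P: "h = (P, 0)" "degree P \<le> c" by (auto simp: poly_sub_def)
  have "degree (y_act (- r) P) \<le> c" using P(2) degree_y_act_le order_trans by blast
  then have "\<pi> (y_act (- r) P, 0) v = v" using v by (auto simp: poly_sub_def invariant_vectors_def)
  then show "\<pi> h (\<pi> (0, r) v) = \<pi> (0, r) v" using rep_translation_y[OF P(2)] P(1) by simp
qed

text \<open>The projection of \<open>v\<close> to the \<open>R[x]\<^sub>\<le>\<^sub>c\<close>-invariant vectors is still
  \<open>Y\<close>-invariant, hence invariant under all of \<open>\<Gamma>\<close>, hence zero.\<close>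

lemma Y_invariant_orthogonal_poly_invariants:
  assumes no_invariants: "invariant_vectors \<pi> (gamma_carrier c) = {0}"
    and v: "v \<in> invariant_vectors \<pi> Y_sub" and w: "w \<in> invariant_vectors \<pi> (poly_sub c)"
  shows "inner v w = 0"
proof -
  let ?M = "invariant_vectors \<pi> (poly_sub c)"
  have M: "closed_subspace ?M"
    by (rule invariant_vectors_closed_subspace[OF poly_sub_subset_gamma_carrier])
  define m where "m = orth_proj ?M v"
  have mM: "m \<in> ?M" unfolding m_def by (rule orth_proj_in[OF M])
  have my: "\<pi> (0, r) m = m" for r
  proof -
    have "orth_proj ?M (\<pi> (0, r) v) = \<pi> (0, r) (orth_proj ?M v)"
    proof (rule orth_proj_commute[OF M])
      show "linear (\<pi> (0, r))" by (intro linear_rep) simp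
      show "\<pi> (0, - r) (\<pi> (0, r) u) = u" "\<pi> (0, r) (\<pi> (0, - r) u) = u" for u
        by (simp_all add: rep_y_y)
      show "inner (\<pi> (0, r) a) (\<pi> (0, r) b) = inner a b" for a b by (intro inner_rep) simp
      show "\<pi> (0, r) s \<in> ?M" "\<pi> (0, - r) s \<in> ?M" if "s \<in> ?M" for s
        using that by (simp_all add: y_preserves_poly_invariants)
    qed
    moreover have "\<pi> (0, r) v = v" using v by (auto simp: Y_sub_def invariant_vectors_def)
    ultimately show ?thesis by (simp add: m_def)
  qed
  have "m \<in> invariant_vectors \<pi> (gamma_carrier c)"
  proof (rule invariant_vectorsI)
    fix g :: "'r poly \<times> 'r" assume "g \<in> gamma_carrier c"
    then obtain P r where g: "g = (P, r)" "degree P \<le> c" by (cases g) auto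
    have "\<pi> g m = \<pi> (P, 0) m" using g(1) rep_split[OF g(2), of r m] my[of r] by simp
    also have "\<dots> = m" using mM g(2) by (auto simp: poly_sub_def invariant_vectors_def)
    finally show "\<pi> g m = m" .
  qed
  then have "m = 0" using no_invariants by blast
  have "inner v w = inner v (orth_proj ?M w)" using orth_proj_id[OF M w] by simp
  also have "\<dots> = inner m w" by (simp add: m_def orth_proj_self_adjoint[OF M])
  finally show ?thesis using \<open>m = 0\<close> by simp
qed

lemma y_maps_X0_invariants:
  assumes v: "v \<in> invariant_vectors \<pi> (X0_sub c)"
  shows "\<pi> (0, t) v \<in> invariant_vectors \<pi> (X0_conj c t)"
proof (rule invariant_vectorsI)
  fix h :: "'r poly \<times> 'r" assume "h \<in> X0_conj c t"
  then obtain s where h: "h = (y_act t (monom s c), 0)" by (auto simp: X0_conj_def)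
  have "\<pi> (monom s c, 0) v = v" using v by (auto simp: X0_sub_def invariant_vectors_def)
  then show "\<pi> h (\<pi> (0, t) v) = \<pi> (0, t) v"
    using rep_translation_y[OF degree_y_act_monom_le, of t s] h by simp
qed

lemma rep_sum_X0_conj_fixes:
  assumes "finite K" "\<And>k. k \<in> K \<Longrightarrow> w \<in> invariant_vectors \<pi> (X0_conj c (\<tau> k))"
  shows "\<pi> (\<Sum>k\<in>K. y_act (\<tau> k) (monom (s k) c), 0) w = w"
  using assms
proof (induction K rule: finite_induct)
  case (insert a K)
  have "degree (\<Sum>k\<in>K. y_act (\<tau> k) (monom (s k) c)) \<le> c"
    using insert.hyps(1) by (intro degree_sum_le degree_y_act_monom_le)
  then have "\<pi> (\<Sum>k\<in>insert a K. y_act (\<tau> k) (monom (s k) c), 0) w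
      = \<pi> (y_act (\<tau> a) (monom (s a) c), 0) (\<pi> (\<Sum>k\<in>K. y_act (\<tau> k) (monom (s k) c), 0) w)"
    using insert.hyps rep_translation_translation[OF degree_y_act_monom_le] by simp
  also have "\<dots> = \<pi> (y_act (\<tau> a) (monom (s a) c), 0) w" using insert by simp
  also have "\<dots> = w"
    using insert.prems[of a] by (auto simp: X0_conj_def invariant_vectors_def)
  finally show ?case .
qed simp

lemma common_X0_conj_invariants_poly_invariant:
  assumes K: "finite K" "card K = Suc c" "unit_separated \<tau> K"
    and binom: "\<And>i. i \<le> c \<Longrightarrow> (of_nat (c choose i) :: 'r) dvd 1"
    and w: "\<And>k. k \<in> K \<Longrightarrow> w \<in> invariant_vectors \<pi> (X0_conj c (\<tau> k))"
  shows "w \<in> invariant_vectors \<pi> (poly_sub c)"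
proof (rule invariant_vectorsI)
  fix h :: "'r poly \<times> 'r" assume "h \<in> poly_sub c"
  then obtain P where P: "h = (P, 0)" "degree P \<le> c" by (auto simp: poly_sub_def)
  obtain s where "P = (\<Sum>k\<in>K. smult (s k) ([:\<tau> k, 1:] ^ c))"
    using shifted_powers_span[OF K binom P(2)] by blast
  then have "P = (\<Sum>k\<in>K. y_act (\<tau> k) (monom (s k) c))" by (simp add: y_act_monom)
  then show "\<pi> h w = w" using rep_sum_X0_conj_fixes[OF K(1) w] P(1) by simp
qed

lemma orth_to_intersections_X0_conj:
  assumes no_invariants: "invariant_vectors \<pi> (gamma_carrier c) = {0}"
    and v: "v \<in> invariant_vectors \<pi> Y_sub"
    and N: "c < N" and primes: "\<And>q. prime q \<Longrightarrow> q < N \<Longrightarrow> (of_nat q :: 'r) dvd 1"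
  shows "orth_to_intersections (\<lambda>j. invariant_vectors \<pi> (X0_conj c (of_nat j :: 'r))) N c v"
  unfolding orth_to_intersections_def
proof (intro allI impI)
  fix K w
  assume K: "K \<subseteq> {..<N}" "card K = Suc c" "\<forall>k\<in>K. w \<in> invariant_vectors \<pi> (X0_conj c (of_nat k))"
  have "w \<in> invariant_vectors \<pi> (poly_sub c)"
  proof (rule common_X0_conj_invariants_poly_invariant)
    show "finite K" using K(1) finite_subset by blast
    show "unit_separated (of_nat :: nat \<Rightarrow> 'r) K"
      using unit_separated_of_nat_below[OF primes] K(1) by (rule unit_separated_subset)
    show "(of_nat (c choose i) :: 'r) dvd 1" if "i \<le> c" for i
      using binomial_unit_below[OF primes N that] .
  qed (use K in auto)
  then show "inner v w = 0" by (rule Y_invariant_orthogonal_poly_invariants[OF no_invariants v])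
qed

lemma inner_X0_Y_bound:
  assumes no_invariants: "invariant_vectors \<pi> (gamma_carrier c) = {0}"
    and v1: "v1 \<in> invariant_vectors \<pi> (X0_sub c)" "norm v1 = 1"
    and v2: "v2 \<in> invariant_vectors \<pi> Y_sub" "norm v2 = 1"
    and N: "c < N" and primes: "\<And>q. prime q \<Longrightarrow> q < N \<Longrightarrow> (of_nat q :: 'r) dvd 1"
  shows "real N * (inner v1 v2)^2 \<le> real c"
proof -
  define W where "W j = invariant_vectors \<pi> (X0_conj c (of_nat j :: 'r))" for j
  have W: "closed_subspace (W j)" for j
    unfolding W_def using X0_conj_subset_poly_sub poly_sub_subset_gamma_carrier
    by (intro invariant_vectors_closed_subspace) blast
  have le_proj: "\<bar>inner v1 v2\<bar> \<le> norm (orth_proj (W j) v2)" for j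
  proof -
    define w where "w = \<pi> (0, of_nat j) v1"
    have wW: "w \<in> W j" unfolding w_def W_def by (rule y_maps_X0_invariants[OF v1(1)])
    have "inner v1 v2 = inner w (\<pi> (0, of_nat j) v2)" unfolding w_def by (simp add: inner_rep)
    also have "\<dots> = inner w v2" using v2(1) by (auto simp: Y_sub_def invariant_vectors_def)
    also have "\<dots> = inner w (orth_proj (W j) v2)"
      by (metis orth_proj_id[OF W wW] orth_proj_self_adjoint[OF W])
    finally show ?thesis
      using Cauchy_Schwarz_ineq2[of w "orth_proj (W j) v2"] v1(2) norm_rep[of "(0, of_nat j)" v1]
      by (simp add: w_def)
  qed
  have "(\<Sum>j<N. (inner v1 v2)^2) \<le> (\<Sum>j<N. norm (orth_proj (W j) v2)^2)"
    using le_proj by (intro sum_mono) (metis abs_ge_zero power2_abs power_mono)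
  also have "\<dots> \<le> real c * norm v2^2"
  proof (rule sum_norm_orth_proj_le[OF W])
    show "orth_proj (W i) w \<in> W j" if "w \<in> W j" for i j w
      using that X0_conj_subset_poly_sub unfolding W_def
      by (intro orth_proj_invariants_preserves_invariants)
    show "orth_to_intersections W N c v2"
      unfolding W_def by (rule orth_to_intersections_X0_conj[OF no_invariants v2(1) N primes])
  qed
  finally show ?thesis using v2(2) by simp
qed

lemma rotation_preserves_invariants:
  assumes "G \<subseteq> gamma_carrier c" "v \<in> invariant_vectors \<pi> G"
  shows "a *\<^sub>R v + b *\<^sub>R J v \<in> invariant_vectors \<pi> G"
proof (rule invariant_vectorsI)
  fix h assume h: "h \<in> G"
  then have "h \<in> gamma_carrier c" using assms(1) by blast
  then show "\<pi> h (a *\<^sub>R v + b *\<^sub>R J v) = a *\<^sub>R v + b *\<^sub>R J v"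
    using invariant_vectorsD[OF assms(2) h] linear_rep rep_J by (simp add: linear_add linear_scale)
qed

lemma cmod_cinner_X0_Y_bound:
  assumes no_invariants: "invariant_vectors \<pi> (gamma_carrier c) = {0}"
    and v1: "v1 \<in> invariant_vectors \<pi> (X0_sub c)" "norm v1 = 1"
    and v2: "v2 \<in> invariant_vectors \<pi> Y_sub" "norm v2 = 1"
    and "c < N" "\<And>q. prime q \<Longrightarrow> q < N \<Longrightarrow> (of_nat q :: 'r) dvd 1"
  shows "real N * (cmod (cinner J v1 v2))^2 \<le> real c"
proof -
  obtain a b where ab: "a^2 + b^2 = 1" "cmod (cinner J v1 v2) = inner v1 (a *\<^sub>R v2 + b *\<^sub>R J v2)"
    by (rule cmod_cinner_eq_inner_rotation)
  have "a *\<^sub>R v2 + b *\<^sub>R J v2 \<in> invariant_vectors \<pi> Y_sub"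
    using v2(1) by (intro rotation_preserves_invariants) (auto simp: Y_sub_def)
  moreover have "norm (a *\<^sub>R v2 + b *\<^sub>R J v2) = 1"
    using norm_rotation[OF complex_structure ab(1)] v2(2) by simp
  ultimately show ?thesis
    using inner_X0_Y_bound[OF no_invariants v1] assms(6,7) ab(2) by simp
qed

end


theorem mainTheorem7:
  fixes c :: nat
    and \<pi> :: "'r::comm_ring_1 poly \<times> 'r \<Rightarrow> 'v::{real_inner,complete_space} \<Rightarrow> 'v"
    and J :: "'v \<Rightarrow> 'v"
    and v1 v2 :: 'v
  assumes "countable (UNIV :: 'r set)"
    and "1 \<le> c" and "enat c + 1 \<le> least_nonunit_prime TYPE('r)"
    and "unitary_rep c \<pi> J"
    and "invariant_vectors \<pi> (gamma_carrier c) = {0}"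
    and "v1 \<in> invariant_vectors \<pi> (X0_sub c)" and "norm v1 = 1"
    and "v2 \<in> invariant_vectors \<pi> Y_sub" and "norm v2 = 1"
  shows "cmod (cinner J v1 v2) \<le> eps_bound c (least_nonunit_prime TYPE('r))"
proof -
  interpret gamma_rep c \<pi> J by unfold_locales (rule assms(4))
  show ?thesis
  proof (rule le_eps_bound)
    show "real N * (cmod (cinner J v1 v2))^2 \<le> real c"
      if "c < N" "\<And>q. prime q \<Longrightarrow> q < N \<Longrightarrow> (of_nat q :: 'r) dvd 1" for N
      using cmod_cinner_X0_Y_bound[OF assms(5-9) that] .
  qed (simp_all add: assms(3))
qed

end
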